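(* Consider a single flow on a route of $n$ links $\mathcal{T}_0,\dots,\mathcal{T}_{n-1}$ under the $\phi$-hop interference model, $0\le\phi\le n-1$, with slice widths $w_0=w_1=\dots=w_{n-1}$ all equal. Then the Ordered Round-Robin policy $ORR$ is both throughput-optimal and deadline-optimal.
   Context: Time is slotted. Under $\phi$-hop interference on the line, distinct links $\mathcal{T}_j,\mathcal{T}_{j'}$ cannot be active in the same slot if $|j-j'|\le\phi$. Each link $\mathcal{T}_j$ has a slice of width $w_j$ for the flow with a FCFS queue; the flow has deterministic fluid arrival rate $\lambda>0$ per slot. Units arriving in slot $t$ are available at the first link from slot $t+1$; an activated link serves $\min\{Q,w_j\}$ from its queue of size $Q$; units served at a link in slot $t$ are available at the next link from slot $t+1$; a packet's delay is the slot in which it is served at the last link minus its arrival slot. Policies are admissible (respect interference, work-conserving) and cyclic with period $K^\pi$; $\bar{\mu}^\pi_e=\frac1{K^\pi}\sum_{t=0}^{K^\pi-1}\mu^\pi_e(t)$ is the activation rate of link $e$. Throughput: $\lambda^*(\pi,\boldsymbol{w})=\min_e\bar{\mu}^\pi_e w_e$; $\pi$ is throughput-optimal for $\boldsymbol{w}$ if $\lambda^*(\pi,\boldsymbol{w})\ge\lambda^*(\pi',\boldsymbol{w})$ for all cyclic admissible $\pi'$. Deadlines: $\tau^*(\pi,\boldsymbol{w},\lambda)$ is the maximum packet delay under $\pi$, $\tau^*(\pi)=\lim_{\lambda\to0}\tau^*(\pi,\boldsymbol{w},\lambda)$, and $\pi$ is deadline-optimal if $\tau^*(\pi)\le\tau^*(\pi')$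 for all cyclic admissible $\pi'$. The $ORR$ policy has period $\phi+1$ and in slot $t$ activates every link $\mathcal{T}_j$ with $j\equiv t\pmod{\phi+1}$. *)

theory Defs
  imports Complex_Main "HOL-Library.Extended_Real"
begin

text \<open>Links are indexed 0..n-1.  A schedule mu maps a slot t and a link j to
  True iff link j is activated in slot t.  A cyclic policy is a pair (K, mu)
  with period K > 0 and mu (t + K) = mu t.\<close>

type_synonym schedule = "nat \<Rightarrow> nat \<Rightarrow> bool"

definition cyclic_admissible :: "nat \<Rightarrow> nat \<Rightarrow> nat \<Rightarrow> schedule \<Rightarrow> bool" where
  "cyclic_admissible n phi K mu \<longleftrightarrow>
     0 < K \<and> (\<forall>t. mu (t + K) = mu t) \<and>
     (\<forall>t j j'. j < n \<and> j' < n \<and> j \<noteq> j' \<and> mu t j \<and> mu t j'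
        \<longrightarrow> phi < nat \<bar>int j - int j'\<bar>)"

definition act_rate :: "nat \<Rightarrow> schedule \<Rightarrow> nat \<Rightarrow> real" where
  "act_rate K mu e = (\<Sum>t<K. if mu t e then 1 else 0) / real K"

definition throughput :: "nat \<Rightarrow> (nat \<Rightarrow> real) \<Rightarrow> nat \<Rightarrow> schedule \<Rightarrow> real" where
  "throughput n w K mu = Min ((\<lambda>e. act_rate K mu e * w e) ` {..<n})"

definition throughput_optimal ::
  "nat \<Rightarrow> nat \<Rightarrow> (nat \<Rightarrow> real) \<Rightarrow> nat \<Rightarrow> schedule \<Rightarrow> bool" where
  "throughput_optimal n phi w K mu \<longleftrightarrow> cyclic_admissible n phi K mu \<and>
     (\<forall>K' mu'. cyclic_admissible n phi K' mu' \<longrightarrow>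
        throughput n w K' mu' \<le> throughput n w K mu)"

definition srv :: "schedule \<Rightarrow> (nat \<Rightarrow> real) \<Rightarrow> (nat \<Rightarrow> real) \<Rightarrow> nat \<Rightarrow> nat \<Rightarrow> real" where
  "srv mu w Q t j = (if mu t j then min (Q j) (w j) else 0)"

text \<open>queues mu w lam t j: queue size at link j at the beginning of slot t.
  Arrivals of slot t reach link 0 at slot t+1; service at link j-1 in slot t
  reaches link j at slot t+1.\<close>
fun queues :: "schedule \<Rightarrow> (nat \<Rightarrow> real) \<Rightarrow> real \<Rightarrow> nat \<Rightarrow> nat \<Rightarrow> real" where
  "queues mu w lam 0 = (\<lambda>j. 0)"
| "queues mu w lam (Suc t) = (\<lambda>j.
     queues mu w lam t j - srv mu w (queues mu w lam t) t j
     + (if j = 0 then lam else srv mu w (queues mu w lam t) t (j - 1)))"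

definition departed :: "nat \<Rightarrow> schedule \<Rightarrow> (nat \<Rightarrow> real) \<Rightarrow> real \<Rightarrow> nat \<Rightarrow> real" where
  "departed n mu w lam t = (\<Sum>s\<le>t. srv mu w (queues mu w lam s) s (n - 1))"

text \<open>Maximum delay of the fluid that arrived in slot t (FCFS): the last of it is
  the (lam*(t+1))-th unit, served at the last link in the first slot t' with
  departed t' \<ge> lam*(t+1); its delay is t' - t.\<close>
definition slot_delay :: "nat \<Rightarrow> schedule \<Rightarrow> (nat \<Rightarrow> real) \<Rightarrow> real \<Rightarrow> nat \<Rightarrow> ereal" where
  "slot_delay n mu w lam t =
     (if \<exists>t'. lam * real (t + 1) \<le> departed n mu w lam t'
      then ereal (real ((LEAST t'. lam * real (t + 1) \<le> departed n mu w lam t') - t))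
      else \<infinity>)"

definition max_delay :: "nat \<Rightarrow> schedule \<Rightarrow> (nat \<Rightarrow> real) \<Rightarrow> real \<Rightarrow> ereal" where
  "max_delay n mu w lam = (SUP t. slot_delay n mu w lam t)"

definition deadline :: "nat \<Rightarrow> schedule \<Rightarrow> (nat \<Rightarrow> real) \<Rightarrow> ereal" where
  "deadline n mu w = Lim (at_right 0) (\<lambda>lam. max_delay n mu w lam)"

definition deadline_optimal ::
  "nat \<Rightarrow> nat \<Rightarrow> (nat \<Rightarrow> real) \<Rightarrow> nat \<Rightarrow> schedule \<Rightarrow> bool" where
  "deadline_optimal n phi w K mu \<longleftrightarrow> cyclic_admissible n phi K mu \<and>
     (\<forall>K' mu'. cyclic_admissible n phi K' mu' \<longrightarrow>
        deadline n mu w \<le> deadline n mu' w)"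

definition ORR :: "nat \<Rightarrow> schedule" where
  "ORR phi t j \<longleftrightarrow> j mod (phi + 1) = t mod (phi + 1)"

end

theory Submission
  imports Defs
begin

(* Throughput: the links 0..phi pairwise interfere, so their activation rates sum to at most 1
   and the smallest of them is at most 1/(phi+1); ORR activates every link at exactly that rate.

   Deadline: for small lam no activated link ever holds more than its width, so the fluid system
   is lam times the system with unit arrivals and unlimited widths, and the maximal delay does not
   depend on lam. In that system ORR forwards the fluid of slot t along a green wave that starts
   at the next multiple of phi+1, so it leaves by slot t+n+phi. Conversely, in any phi
   consecutive slots some link j \<le> phi stays idle; the fluid that arrived up to slot phi-j
   has then not passed link j when the idle stretch ends, and needs n-1-j more slots to leave. *)

lemma cyclic_admissible_conflict:
  assumes "cyclic_admissible n phi K mu" "phi < n"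
  shows "\<forall>t j j'. j \<le> phi \<longrightarrow> j' \<le> phi \<longrightarrow> mu t j \<longrightarrow> mu t j' \<longrightarrow> j = j'"
proof (intro allI impI, rule ccontr)
  fix t j j'
  assume "j \<le> phi" "j' \<le> phi" "mu t j" "mu t j'" "j \<noteq> j'"
  moreover have "j < n" "j' < n" using \<open>j \<le> phi\<close> \<open>j' \<le> phi\<close> assms(2) by linarith+
  ultimately have "phi < nat \<bar>int j - int j'\<bar>"
    using assms(1) unfolding cyclic_admissible_def by blast
  then show False using \<open>j \<le> phi\<close> \<open>j' \<le> phi\<close> by linarith
qed

lemma ORR_cyclic_admissible: "cyclic_admissible n phi (phi + 1) (ORR phi)"
  unfolding cyclic_admissible_def
proof (intro conjI allI impI)
  show "ORR phi (t + (phi + 1)) = ORR phi t" for t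
    by (intro ext) (metis ORR_def mod_add_self2)
next
  fix t j j'
  assume "j < n \<and> j' < n \<and> j \<noteq> j' \<and> ORR phi t j \<and> ORR phi t j'"
  then have "j mod (phi + 1) = j' mod (phi + 1)" and "j \<noteq> j'"
    unfolding ORR_def by simp_all
  then have "(phi + 1) dvd nat \<bar>int j - int j'\<bar>" and "0 < nat \<bar>int j - int j'\<bar>"
    by (simp_all only: mod_eq_iff_dvd_symdiff_nat)
  then have "phi + 1 \<le> nat \<bar>int j - int j'\<bar>" by (rule dvd_imp_le)
  then show "phi < nat \<bar>int j - int j'\<bar>" by simp
qed simp

lemma act_rate_sum_le_1:
  assumes "0 < K" "finite A" and conflict: "\<forall>t. \<forall>e\<in>A. \<forall>e'\<in>A. mu t e \<longrightarrow> mu t e' \<longrightarrow> e = e'"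
  shows "(\<Sum>e\<in>A. act_rate K mu e) \<le> 1"
proof -
  have active: "(\<Sum>e\<in>A. if mu t e then 1 else 0) \<le> (1::real)" for t
  proof -
    have "card {e\<in>A. mu t e} \<le> Suc 0"
      using conflict \<open>finite A\<close> by (subst card_le_Suc0_iff_eq) auto
    then show ?thesis using \<open>finite A\<close> by (simp add: sum.inter_filter[symmetric])
  qed
  have "(\<Sum>e\<in>A. act_rate K mu e) = (\<Sum>t<K. \<Sum>e\<in>A. if mu t e then 1 else 0) / real K"
    by (simp add: act_rate_def sum_divide_distrib[symmetric] sum.swap[of _ A])
  also have "\<dots> \<le> (\<Sum>t<K. 1) / real K"
    by (intro divide_right_mono sum_mono active) simp
  finally show ?thesis using \<open>0 < K\<close> by simp
qed

lemma throughput_le: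
  assumes "cyclic_admissible n phi K mu" "phi < n" "\<forall>j<n. w j = w 0" "0 \<le> w 0"
  shows "throughput n w K mu \<le> w 0 / real (phi + 1)"
proof -
  let ?m = "throughput n w K mu"
  have "?m \<le> act_rate K mu e * w 0" if "e \<le> phi" for e
  proof -
    have "e < n" using that assms(2) by linarith
    moreover have "w e = w 0" using calculation assms(3) by blast
    ultimately have "act_rate K mu e * w 0 \<in> (\<lambda>e. act_rate K mu e * w e) ` {..<n}"
      by (intro rev_image_eqI[of e]) simp_all
    then show ?thesis unfolding throughput_def by (intro Min_le) simp_all
  qed
  then have "real (phi + 1) * ?m \<le> (\<Sum>e\<le>phi. act_rate K mu e) * w 0"
    using sum_mono[of "{..phi}" "\<lambda>_. ?m"] by (simp add: sum_distrib_right)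
  also have "\<dots> \<le> w 0"
    using act_rate_sum_le_1[of K "{..phi}" mu] cyclic_admissible_conflict[OF assms(1,2)] assms(1,4)
      mult_right_mono[of _ 1 "w 0"]
    by (simp add: cyclic_admissible_def)
  finally show ?thesis by (simp add: field_simps)
qed

lemma act_rate_ORR: "act_rate (phi + 1) (ORR phi) e = 1 / real (phi + 1)"
proof -
  have "(\<Sum>t<phi + 1. if ORR phi t e then 1 else 0) = (\<Sum>t<phi + 1. if t = e mod (phi + 1) then 1 else (0::real))"
    by (intro sum.cong) (auto simp: ORR_def)
  also have "\<dots> = 1" by (subst sum.delta) auto
  finally show ?thesis by (simp add: act_rate_def)
qed

lemma throughput_ORR:
  assumes "0 < n" "\<forall>j<n. w j = w 0"
  shows "throughput n w (phi + 1) (ORR phi) = w 0 / real (phi + 1)"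
proof -
  have "act_rate (phi + 1) (ORR phi) e * w e = w 0 / real (phi + 1)" if "e < n" for e
  proof -
    have "w e = w 0" using that assms(2) by blast
    then show ?thesis using act_rate_ORR[of phi e] by simp
  qed
  then have "(\<lambda>e. act_rate (phi + 1) (ORR phi) e * w e) ` {..<n} = (\<lambda>e. w 0 / real (phi + 1)) ` {..<n}"
    by (intro image_cong) auto
  then show ?thesis using assms(1) by (simp add: throughput_def image_constant[of 0])
qed

text \<open>The fluid system with unit arrival rate and unlimited widths, in which an active link
  forwards its whole queue. As long as no active link holds more than its width, the actual
  queues at arrival rate lam are lam times these.\<close>
fun free_queue :: "schedule \<Rightarrow> nat \<Rightarrow> nat \<Rightarrow> real" where
  "free_queue mu 0 j = 0"
| "free_queue mu (Suc s) j =
     (if mu s j then 0 else free_queue mu s j)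
     + (if j = 0 then 1 else if mu s (j - 1) then free_queue mu s (j - 1) else 0)"

definition free_served :: "schedule \<Rightarrow> nat \<Rightarrow> nat \<Rightarrow> real" where
  "free_served mu s j = (if mu s j then free_queue mu s j else 0)"

definition free_inflow :: "schedule \<Rightarrow> nat \<Rightarrow> nat \<Rightarrow> real" where
  "free_inflow mu s j = (if j = 0 then 1 else free_served mu s (j - 1))"

definition cum_inflow :: "schedule \<Rightarrow> nat \<Rightarrow> nat \<Rightarrow> real" where
  "cum_inflow mu j s = (\<Sum>r<s. free_inflow mu r j)"

definition cum_served :: "schedule \<Rightarrow> nat \<Rightarrow> nat \<Rightarrow> real" where
  "cum_served mu j s = (\<Sum>r<s. free_served mu r j)"

definition free_slot_delay :: "nat \<Rightarrow> schedule \<Rightarrow> nat \<Rightarrow> ereal" where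
  "free_slot_delay n mu t =
     (if \<exists>t'. real (t + 1) \<le> cum_served mu (n - 1) (Suc t')
      then ereal (real ((LEAST t'. real (t + 1) \<le> cum_served mu (n - 1) (Suc t')) - t))
      else \<infinity>)"

definition free_max_delay :: "nat \<Rightarrow> schedule \<Rightarrow> ereal" where
  "free_max_delay n mu = (SUP t. free_slot_delay n mu t)"

lemma free_queue_Suc:
  "free_queue mu (Suc s) j = free_queue mu s j - free_served mu s j + free_inflow mu s j"
  by (simp add: free_served_def free_inflow_def)

lemma free_queue_nonneg: "0 \<le> free_queue mu s j"
  by (induction s arbitrary: j) auto

lemma free_served_nonneg: "0 \<le> free_served mu s j"
  by (simp add: free_served_def free_queue_nonneg)

lemma free_served_le_free_queue: "free_served mu s j \<le> free_queue mu s j"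
  by (simp add: free_served_def free_queue_nonneg)

lemma free_queue_eq_cum_diff: "free_queue mu s j = cum_inflow mu j s - cum_served mu j s"
  by (induction s) (simp_all add: free_queue_Suc cum_inflow_def cum_served_def del: free_queue.simps(2))

lemma cum_served_Suc_le: "cum_served mu j (Suc s) \<le> cum_inflow mu j s"
  using free_served_le_free_queue[of mu s j] free_queue_eq_cum_diff[of mu s j]
  by (simp add: cum_served_def)

lemma cum_served_Suc_active: "mu s j \<Longrightarrow> cum_served mu j (Suc s) = cum_inflow mu j s"
  using free_queue_eq_cum_diff[of mu s j] by (simp add: cum_served_def free_served_def)

lemma cum_inflow_0: "cum_inflow mu 0 s = real s"
  by (simp add: cum_inflow_def free_inflow_def)

lemma cum_inflow_Suc: "cum_inflow mu (Suc j) s = cum_served mu j s"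
  by (simp add: cum_inflow_def cum_served_def free_inflow_def)

lemma cum_served_mono: "s \<le> s' \<Longrightarrow> cum_served mu j s \<le> cum_served mu j s'"
  unfolding cum_served_def by (rule sum_mono2) (auto simp: free_served_nonneg)

lemma cum_inflow_le: "cum_inflow mu j s \<le> real (s - j)"
proof (induction j arbitrary: s)
  case 0
  then show ?case by (simp add: cum_inflow_0)
next
  case (Suc j)
  show ?case
  proof (cases s)
    case 0
    then show ?thesis by (simp add: cum_inflow_Suc cum_served_def)
  next
    case (Suc s')
    have "cum_served mu j (Suc s') \<le> cum_inflow mu j s'" by (rule cum_served_Suc_le)
    also have "\<dots> \<le> real (s' - j)" by (rule Suc.IH)
    finally show ?thesis using Suc by (simp add: cum_inflow_Suc)
  qed
qed

lemma cum_served_shift: "cum_served mu (j + k) (s + k) \<le> cum_served mu j s"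
proof (induction k)
  case 0
  then show ?case by simp
next
  case (Suc k)
  have "cum_served mu (Suc (j + k)) (Suc (s + k)) \<le> cum_inflow mu (Suc (j + k)) (s + k)"
    by (rule cum_served_Suc_le)
  also have "\<dots> = cum_served mu (j + k) (s + k)" by (rule cum_inflow_Suc)
  finally show ?case using Suc by simp
qed

lemma cum_served_idle:
  assumes "a \<le> b" "\<forall>r\<in>{a..<b}. \<not> mu r j"
  shows "cum_served mu j b = cum_served mu j a"
  using assms
proof (induction b rule: dec_induct)
  case base
  then show ?case by simp
next
  case (step b)
  then show ?case by (simp add: cum_served_def free_served_def)
qed

lemma free_queue_growth:
  assumes "\<forall>s. free_inflow mu s j \<le> c"
  shows "free_queue mu (s + d) j \<le> free_queue mu s j + real d * c"
proof (induction d)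
  case 0
  then show ?case by simp
next
  case (Suc d)
  have "free_queue mu (Suc (s + d)) j \<le> free_queue mu (s + d) j + c"
    using free_queue_Suc[of mu "s + d" j] free_served_nonneg[of mu "s + d" j] assms[rule_format, of "s + d"]
    by linarith
  then show ?case using Suc by (simp add: algebra_simps)
qed

text \<open>A link of a K-periodic schedule that is active in slot s was also active in slot s - K,
  so it has accumulated at most K slots of inflow.\<close>
lemma free_served_le:
  assumes per: "\<forall>t. mu (t + K) = mu t" and "0 < K"
    and inflow: "\<forall>s. free_inflow mu s j \<le> c" and "0 \<le> c"
  shows "free_served mu s j \<le> real K * c"
proof (cases "mu s j")
  case False
  then show ?thesis using \<open>0 \<le> c\<close> by (simp add: free_served_def)
next
  case active: True
  show ?thesis
  proof (cases "s < K")
    case True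
    have "free_queue mu (0 + s) j \<le> free_queue mu 0 j + real s * c"
      by (rule free_queue_growth[OF inflow])
    also have "\<dots> \<le> real K * c" using True \<open>0 \<le> c\<close> by (simp add: mult_right_mono)
    finally show ?thesis using free_served_le_free_queue[of mu s j] by simp
  next
    case False
    define s0 where "s0 = s - K"
    have s: "s = Suc s0 + (K - 1)" using False \<open>0 < K\<close> by (simp add: s0_def)
    have "mu s0 j" using active per[rule_format, of s0] False by (simp add: s0_def)
    then have "free_queue mu (Suc s0) j \<le> c"
      using free_queue_Suc[of mu s0 j] inflow by (simp add: free_served_def)
    moreover have "free_queue mu s j \<le> free_queue mu (Suc s0) j + real (K - 1) * c"
      unfolding s by (rule free_queue_growth[OF inflow])
    moreover have "c + real (K - 1) * c = real K * c" using \<open>0 < K\<close> by (simp add: algebra_simps of_nat_diff)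
    ultimately show ?thesis using free_served_le_free_queue[of mu s j] by linarith
  qed
qed

lemma free_served_le_power:
  assumes "\<forall>t. mu (t + K) = mu t" and "0 < K"
  shows "free_served mu s j \<le> real K ^ Suc j"
proof (induction j arbitrary: s)
  case 0
  show ?case using free_served_le[OF assms, of 0 1] by (simp add: free_inflow_def)
next
  case (Suc j)
  have "\<forall>s. free_inflow mu s (Suc j) \<le> real K ^ Suc j" using Suc by (simp add: free_inflow_def)
  then show ?case using free_served_le[OF assms, of "Suc j" "real K ^ Suc j"] by simp
qed

lemma srv_scaled:
  assumes "Q j = lam * free_queue mu s j" and "lam * free_served mu s j \<le> w j"
  shows "srv mu w Q s j = lam * free_served mu s j"
  using assms by (cases "mu s j") (simp_all add: srv_def free_served_def min_def)

lemma queues_scaled: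
  assumes small: "\<forall>s j. j < n \<longrightarrow> lam * free_served mu s j \<le> w j" and "j < n"
  shows "queues mu w lam s j = lam * free_queue mu s j"
  using \<open>j < n\<close>
proof (induction s arbitrary: j)
  case 0
  then show ?case by simp
next
  case (Suc s)
  have "srv mu w (queues mu w lam s) s i = lam * free_served mu s i" if "i \<le> j" for i
    using Suc that small by (intro srv_scaled) auto
  then show ?case using Suc
    by (simp add: free_queue_Suc free_inflow_def algebra_simps del: free_queue.simps)
qed

lemma max_delay_eq_free_max_delay:
  assumes "0 < n" "0 < lam" and small: "\<forall>s j. j < n \<longrightarrow> lam * free_served mu s j \<le> w j"
  shows "max_delay n mu w lam = free_max_delay n mu"
proof -
  have "departed n mu w lam t = lam * cum_served mu (n - 1) (Suc t)" for t
  proof -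
    have "departed n mu w lam t = (\<Sum>s\<le>t. lam * free_served mu s (n - 1))"
      unfolding departed_def
      using \<open>0 < n\<close> small by (intro sum.cong refl srv_scaled queues_scaled) auto
    then show ?thesis by (simp add: cum_served_def sum_distrib_left lessThan_Suc_atMost)
  qed
  then have "slot_delay n mu w lam t = free_slot_delay n mu t" for t
    using \<open>0 < lam\<close> by (simp add: slot_delay_def free_slot_delay_def)
  then show ?thesis by (simp add: max_delay_def free_max_delay_def)
qed

lemma deadline_eq_free_max_delay:
  assumes "\<forall>t. mu (t + K) = mu t" "0 < K" "0 < n" "\<forall>j<n. 0 < w j"
  shows "deadline n mu w = free_max_delay n mu"
proof -
  define B where "B = real K ^ n"
  have bound: "free_served mu s j \<le> B" if "j < n" for s j
  proof -
    have "real K ^ Suc j \<le> B" unfolding B_def using that \<open>0 < K\<close> by (intro power_increasing) auto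
    then show ?thesis using free_served_le_power[OF assms(1,2), of s j] by linarith
  qed
  have "((\<lambda>lam. lam * B) \<longlongrightarrow> 0) (at_right 0)"
    by (intro tendsto_mult_left_zero tendsto_ident_at)
  then have "\<forall>j\<in>{..<n}. eventually (\<lambda>lam. lam * B < w j) (at_right 0)"
    using assms(4) by (auto intro: order_tendstoD(2))
  then have "eventually (\<lambda>lam. 0 < lam \<and> (\<forall>j\<in>{..<n}. lam * B < w j)) (at_right (0::real))"
    by (intro eventually_conj eventually_at_right_less eventually_ball_finite) auto
  then have "eventually (\<lambda>lam. max_delay n mu w lam = free_max_delay n mu) (at_right 0)"
  proof (rule eventually_mono)
    fix lam :: real
    assume lam: "0 < lam \<and> (\<forall>j\<in>{..<n}. lam * B < w j)"
    have "lam * free_served mu s j \<le> w j" if "j < n" for s j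
    proof -
      have "lam * free_served mu s j \<le> lam * B" using lam bound[OF that] by (intro mult_left_mono) auto
      also have "\<dots> < w j" using lam that by blast
      finally show ?thesis by simp
    qed
    then show "max_delay n mu w lam = free_max_delay n mu"
      using lam \<open>0 < n\<close> by (intro max_delay_eq_free_max_delay) auto
  qed
  then show ?thesis
    unfolding deadline_def by (intro tendsto_Lim tendsto_eventually) simp_all
qed

lemma free_slot_delay_le:
  assumes "real (t + 1) \<le> cum_served mu (n - 1) (Suc t')"
  shows "free_slot_delay n mu t \<le> ereal (real (t' - t))"
proof -
  have "(LEAST t'. real (t + 1) \<le> cum_served mu (n - 1) (Suc t')) \<le> t'"
    using assms by (rule Least_le)
  then show ?thesis using assms by (auto simp: free_slot_delay_def)
qed

lemma free_slot_delay_ge: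
  assumes "cum_served mu (n - 1) (t + d) < real (t + 1)"
  shows "ereal (real d) \<le> free_slot_delay n mu t"
proof (cases "\<exists>t'. real (t + 1) \<le> cum_served mu (n - 1) (Suc t')")
  case True
  define L where "L = (LEAST t'. real (t + 1) \<le> cum_served mu (n - 1) (Suc t'))"
  have "real (t + 1) \<le> cum_served mu (n - 1) (Suc L)"
    unfolding L_def using True by (rule LeastI_ex)
  have "t + d \<le> L"
  proof (rule ccontr)
    assume "\<not> t + d \<le> L"
    then have "cum_served mu (n - 1) (Suc L) \<le> cum_served mu (n - 1) (t + d)"
      by (intro cum_served_mono) simp
    with \<open>real (t + 1) \<le> cum_served mu (n - 1) (Suc L)\<close> assms show False by linarith
  qed
  moreover have "free_slot_delay n mu t = ereal (real (L - t))"
    unfolding free_slot_delay_def L_def by (simp only: if_P[OF True])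
  ultimately show ?thesis by simp
next
  case False
  then show ?thesis by (simp add: free_slot_delay_def)
qed

lemma cum_served_green_wave:
  assumes "\<forall>i<n. mu (a + i) i" and "i < n"
  shows "real a \<le> cum_served mu i (Suc (a + i))"
  using \<open>i < n\<close>
proof (induction i)
  case 0
  then have "mu a 0" using assms(1) by (metis add_0_right)
  then show ?case by (simp add: cum_served_Suc_active cum_inflow_0)
next
  case (Suc i)
  have "mu (a + Suc i) (Suc i)" using assms(1) Suc.prems by blast
  then have "cum_served mu (Suc i) (Suc (a + Suc i)) = cum_served mu i (Suc (a + i))"
    by (simp add: cum_served_Suc_active cum_inflow_Suc)
  then show ?case using Suc by simp
qed

lemma free_max_delay_ORR_le:
  assumes "0 < n"
  shows "free_max_delay n (ORR phi) \<le> ereal (real (n + phi))"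
  unfolding free_max_delay_def
proof (rule SUP_least)
  fix t
  define a where "a = (t div (phi + 1) + 1) * (phi + 1)"
  have "a = t div (phi + 1) * (phi + 1) + (phi + 1)" by (simp add: a_def)
  moreover have "t = t div (phi + 1) * (phi + 1) + t mod (phi + 1)" by (rule div_mult_mod_eq[symmetric])
  moreover have "t mod (phi + 1) < phi + 1" by simp
  ultimately have a: "t + 1 \<le> a" "a \<le> t + phi + 1" by linarith+
  have "\<forall>i<n. ORR phi (a + i) i" unfolding ORR_def a_def mod_mult_self3 by simp
  then have "real a \<le> cum_served (ORR phi) (n - 1) (Suc (a + (n - 1)))"
    using \<open>0 < n\<close> by (intro cum_served_green_wave) auto
  also have "\<dots> \<le> cum_served (ORR phi) (n - 1) (Suc (t + (n + phi)))"
    using a \<open>0 < n\<close> by (intro cum_served_mono) simp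
  finally have "real (t + 1) \<le> cum_served (ORR phi) (n - 1) (Suc (t + (n + phi)))"
    using a by simp
  then show "free_slot_delay n (ORR phi) t \<le> ereal (real (n + phi))"
    using free_slot_delay_le by fastforce
qed

lemma exists_idle_link:
  fixes mu :: schedule
  assumes conflict: "\<forall>t j j'. j \<le> phi \<longrightarrow> j' \<le> phi \<longrightarrow> mu t j \<longrightarrow> mu t j' \<longrightarrow> j = j'"
  shows "\<exists>j\<le>phi. \<forall>r\<in>{b..<b + phi}. \<not> mu r j"
proof (rule ccontr)
  assume "\<not> ?thesis"
  then obtain f where f: "\<forall>j\<in>{..phi}. f j \<in> {b..<b + phi} \<and> mu (f j) j"
    by (metis atMost_iff)
  have "inj_on f {..phi}"
    using f conflict by (intro inj_onI) (metis atMost_iff)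
  then have "card {..phi} \<le> card {b..<b + phi}"
    using f by (intro card_inj_on_le) auto
  then show False by simp
qed

lemma free_max_delay_ge:
  assumes conflict: "\<forall>t j j'. j \<le> phi \<longrightarrow> j' \<le> phi \<longrightarrow> mu t j \<longrightarrow> mu t j' \<longrightarrow> j = j'"
    and "phi < n"
  shows "ereal (real (n + phi)) \<le> free_max_delay n mu"
proof -
  obtain j where j: "j \<le> phi" "\<forall>r\<in>{Suc phi..<Suc phi + phi}. \<not> mu r j"
    using exists_idle_link[OF conflict] by blast
  define t where "t = phi - j"
  have "n - 1 = j + (n - 1 - j)" "t + (n + phi) = Suc phi + phi + (n - 1 - j)"
    using j \<open>phi < n\<close> unfolding t_def by linarith+
  then have "cum_served mu (n - 1) (t + (n + phi)) = cum_served mu (j + (n - 1 - j)) (Suc phi + phi + (n - 1 - j))"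
    by (simp only:)
  also have "\<dots> \<le> cum_served mu j (Suc phi + phi)" by (rule cum_served_shift)
  also have "\<dots> = cum_served mu j (Suc phi)" using j by (intro cum_served_idle) auto
  also have "\<dots> \<le> cum_inflow mu j phi" by (rule cum_served_Suc_le)
  also have "\<dots> \<le> real t" unfolding t_def by (rule cum_inflow_le)
  finally have "ereal (real (n + phi)) \<le> free_slot_delay n mu t"
    by (intro free_slot_delay_ge) simp
  also have "\<dots> \<le> free_max_delay n mu" unfolding free_max_delay_def by (rule SUP_upper) simp
  finally show ?thesis .
qed

theorem corollary3:
  fixes n phi :: nat and w :: "nat \<Rightarrow> real"
  assumes "phi \<le> n - 1" and "1 \<le> n"
    and "\<forall>j<n. w j = w 0" and "0 < w 0"
  shows "throughput_optimal n phi w (phi + 1) (ORR phi)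
       \<and> deadline_optimal n phi w (phi + 1) (ORR phi)"
proof -
  have "phi < n" and "0 < n" using assms(1,2) by linarith+
  have admissible: "cyclic_admissible n phi (phi + 1) (ORR phi)" by (rule ORR_cyclic_admissible)
  have "\<forall>j<n. 0 < w j" using assms(3,4) by metis
  then have deadline: "deadline n mu w = free_max_delay n mu" if "cyclic_admissible n phi K mu" for K mu
    using that \<open>0 < n\<close> by (intro deadline_eq_free_max_delay[where K = K]) (auto simp: cyclic_admissible_def)
  have "throughput n w K mu \<le> throughput n w (phi + 1) (ORR phi)"
    if "cyclic_admissible n phi K mu" for K mu
    using throughput_le[OF that \<open>phi < n\<close> assms(3)] throughput_ORR[OF \<open>0 < n\<close> assms(3)] assms(4)
    by simp
  moreover have "deadline n (ORR phi) w \<le> deadline n mu w"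
    if "cyclic_admissible n phi K mu" for K mu
  proof -
    have "deadline n (ORR phi) w \<le> ereal (real (n + phi))"
      using deadline[OF admissible] free_max_delay_ORR_le[OF \<open>0 < n\<close>] by simp
    also have "\<dots> \<le> deadline n mu w"
      using deadline[OF that] free_max_delay_ge[OF cyclic_admissible_conflict[OF that \<open>phi < n\<close>] \<open>phi < n\<close>]
      by simp
    finally show ?thesis .
  qed
  ultimately show ?thesis
    using admissible by (simp add: throughput_optimal_def deadline_optimal_def)
qed

end
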